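(* Let $A_1,A_2\in\mathbb{S}^n$ be such that there is no permutation matrix $\Pi\in\mathrm{Sym}(n)$ with $A_1=\Pi A_2\Pi^T$. Then there exists $P\in\mathbb{S}^n$ such that $\Theta_P(A_1)\neq\Theta_P(A_2)$.
   Context: $\mathbb{S}^n$ denotes the space of real symmetric $n\times n$ matrices (adjacency matrices of weighted graphs on $n$ nodes, with diagonal entries as node weights). $\mathrm{Sym}(n)$ denotes the group of $n\times n$ permutation matrices. For $P\in\mathbb{S}^n$, $\Theta_P(A)=\max_{\Pi\in\mathrm{Sym}(n)}\mathrm{tr}(P\Pi A\Pi^T)$. *)

theory Defs
  imports "HOL-Analysis.Analysis"
begin

definition symmetric_matrix :: "real^'n^'n \<Rightarrow> bool" where
  "symmetric_matrix A \<longleftrightarrow> transpose A = A"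

definition perm_matrix :: "('n::finite \<Rightarrow> 'n) \<Rightarrow> real^'n^'n" where
  "perm_matrix p = (\<chi> i j. if p i = j then 1 else 0)"

definition perm_matrices :: "(real^'n^'n) set" where
  "perm_matrices = {perm_matrix p | p. p permutes (UNIV :: 'n::finite set)}"

definition Theta :: "real^'n^'n \<Rightarrow> real^'n^'n \<Rightarrow> real" where
  "Theta P A = Max ((\<lambda>Q. trace (P ** Q ** A ** transpose Q)) ` perm_matrices)"

end

theory Submission
  imports Defs
begin

(* For a symmetric P we have trace (P ** M) = P \<bullet> M, the Frobenius
   inner product, and conjugation M \<mapsto> \<Pi> M \<Pi>^T by a permutation matrix only relabels
   the entries of M, so it preserves the Frobenius norm.  Suppose Theta P A1 = Theta P A2
   for every symmetric P.  Taking P = A1, the identity permutation gives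
   |A1|^2 \<le> Theta A1 A1 = Theta A1 A2 = A1 \<bullet> (\<Pi> A2 \<Pi>^T) for a maximising \<Pi>, hence
   |A1 - \<Pi> A2 \<Pi>^T|^2 \<le> |A2|^2 - |A1|^2.  By symmetry (P = A2) also
   |A2 - \<Pi>' A1 \<Pi>'^T|^2 \<le> |A1|^2 - |A2|^2.  Adding, both right-hand sides vanish, so
   A1 = \<Pi> A2 \<Pi>^T, contradicting the hypothesis. *)

lemma perm_matrix_mult_nth:
  "(perm_matrix p ** A) $ i $ k = A $ (p i) $ k"
proof -
  have "(perm_matrix p ** A) $ i $ k = (\<Sum>j\<in>UNIV. (if p i = j then 1 else 0) * A $ j $ k)"
    by (simp add: matrix_matrix_mult_def perm_matrix_def)
  also have "\<dots> = (\<Sum>j\<in>UNIV. if p i = j then A $ j $ k else 0)"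
    by (rule sum.cong) auto
  finally show ?thesis by simp
qed

lemma perm_conj_nth:
  "(perm_matrix p ** A ** transpose (perm_matrix p)) $ i $ j = A $ (p i) $ (p j)"
proof -
  have "(perm_matrix p ** A ** transpose (perm_matrix p)) $ i $ j
      = (\<Sum>k\<in>UNIV. (perm_matrix p ** A) $ i $ k * (if p j = k then 1 else 0))"
    by (simp add: matrix_matrix_mult_def perm_matrix_def transpose_def)
  also have "\<dots> = (\<Sum>k\<in>UNIV. if p j = k then (perm_matrix p ** A) $ i $ k else 0)"
    by (rule sum.cong) auto
  finally show ?thesis by (simp add: perm_matrix_mult_nth)
qed

lemma inner_matrix_entries:
  "(X::real^'n^'m) \<bullet> Y = (\<Sum>i\<in>UNIV. \<Sum>j\<in>UNIV. X$i$j * Y$i$j)"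
  by (simp add: inner_vec_def)

lemma perm_conj_inner:
  fixes A B :: "real^'n^'n"
  assumes p: "p permutes (UNIV::'n set)"
  shows "(perm_matrix p ** A ** transpose (perm_matrix p)) \<bullet>
         (perm_matrix p ** B ** transpose (perm_matrix p)) = A \<bullet> B"
proof -
  have bij: "bij_betw p UNIV UNIV" using p by (rule permutes_imp_bij)
  have "(perm_matrix p ** A ** transpose (perm_matrix p)) \<bullet>
        (perm_matrix p ** B ** transpose (perm_matrix p))
      = (\<Sum>i\<in>UNIV. \<Sum>j\<in>UNIV. A$(p i)$(p j) * B$(p i)$(p j))"
    by (simp add: inner_matrix_entries perm_conj_nth)
  also have "\<dots> = (\<Sum>i\<in>UNIV. \<Sum>j\<in>UNIV. A$(p i)$j * B$(p i)$j)"
    by (intro sum.cong refl sum.reindex_bij_betw[OF bij])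
  also have "\<dots> = (\<Sum>i\<in>UNIV. \<Sum>j\<in>UNIV. A$i$j * B$i$j)"
    by (rule sum.reindex_bij_betw[OF bij])
  finally show ?thesis by (simp add: inner_matrix_entries)
qed

lemma trace_symmetric_mult:
  fixes P M :: "real^'n^'n"
  assumes "symmetric_matrix P"
  shows "trace (P ** M) = P \<bullet> M"
proof -
  have P_sym: "P$k$i = P$i$k" for i k
    using assms unfolding symmetric_matrix_def by (metis transpose_def vec_lambda_beta)
  have "trace (P ** M) = (\<Sum>i\<in>UNIV. \<Sum>k\<in>UNIV. P$i$k * M$k$i)"
    by (simp add: trace_def matrix_matrix_mult_def)
  also have "\<dots> = (\<Sum>k\<in>UNIV. \<Sum>i\<in>UNIV. P$k$i * M$k$i)"
    by (subst sum.swap) (simp add: P_sym)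
  finally show ?thesis by (simp add: inner_matrix_entries)
qed

lemma perm_matrix_in_perm_matrices:
  "p permutes (UNIV::'n::finite set) \<Longrightarrow> perm_matrix p \<in> (perm_matrices :: (real^'n^'n) set)"
  unfolding perm_matrices_def by blast

lemma finite_perm_matrices: "finite (perm_matrices :: (real^'n::finite^'n) set)"
proof -
  have "(perm_matrices :: (real^'n^'n) set) = perm_matrix ` {p. p permutes (UNIV::'n set)}"
    unfolding perm_matrices_def by auto
  moreover have "finite {p. p permutes (UNIV::'n set)}"
    by (rule finite_permutations) simp
  ultimately show ?thesis by (metis finite_imageI)
qed

lemma mat1_in_perm_matrices: "(mat 1 :: real^'n::finite^'n) \<in> perm_matrices"
proof -
  have "perm_matrix id = (mat 1 :: real^'n^'n)"
    by (simp add: perm_matrix_def mat_def vec_eq_iff)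
  then show ?thesis using perm_matrix_in_perm_matrices[OF permutes_id] by metis
qed

lemma Theta_attained:
  fixes P A :: "real^'n^'n"
  obtains p where "p permutes (UNIV::'n set)"
    and "Theta P A = trace (P ** perm_matrix p ** A ** transpose (perm_matrix p))"
proof -
  have "Theta P A \<in> (\<lambda>Q. trace (P ** Q ** A ** transpose Q)) ` perm_matrices"
    unfolding Theta_def using finite_perm_matrices mat1_in_perm_matrices
    by (intro Max_in) auto
  then show ?thesis using that unfolding perm_matrices_def by auto
qed

(* The identity permutation bounds Theta A A from below by the squared Frobenius norm. *)
lemma inner_self_le_Theta:
  fixes A :: "real^'n^'n"
  assumes "symmetric_matrix A"
  shows "A \<bullet> A \<le> Theta A A"
proof -
  have "trace (A ** mat 1 ** A ** transpose (mat 1)) \<le> Theta A A"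
    unfolding Theta_def
    by (rule Max_ge[OF finite_imageI[OF finite_perm_matrices] imageI[OF mat1_in_perm_matrices]])
  then show ?thesis
    by (simp add: trace_symmetric_mult[OF assms] matrix_mul_rid transpose_mat)
qed

lemma Theta_eq_imp_close:
  fixes A1 A2 :: "real^'n^'n"
  assumes sym: "symmetric_matrix A1" and eq: "Theta A1 A1 = Theta A1 A2"
  obtains p where "p permutes (UNIV::'n set)"
    and "norm (A1 - perm_matrix p ** A2 ** transpose (perm_matrix p))^2 \<le> A2 \<bullet> A2 - A1 \<bullet> A1"
proof -
  obtain p where p: "p permutes (UNIV::'n set)"
    and attained: "Theta A1 A2 = trace (A1 ** perm_matrix p ** A2 ** transpose (perm_matrix p))"
    by (rule Theta_attained)
  define B where "B = perm_matrix p ** A2 ** transpose (perm_matrix p)"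
  have "Theta A1 A2 = A1 \<bullet> B"
    using attained trace_symmetric_mult[OF sym, of B] by (simp add: B_def matrix_mul_assoc)
  then have "A1 \<bullet> A1 \<le> A1 \<bullet> B"
    using inner_self_le_Theta[OF sym] eq by simp
  moreover have "B \<bullet> B = A2 \<bullet> A2"
    unfolding B_def by (rule perm_conj_inner[OF p])
  moreover have "norm (A1 - B)^2 = A1 \<bullet> A1 - 2 * (A1 \<bullet> B) + B \<bullet> B"
    by (simp add: power2_norm_eq_inner inner_diff_left inner_diff_right inner_commute)
  ultimately show ?thesis using that[OF p] unfolding B_def by linarith
qed

theorem lemma1:
  fixes A1 A2 :: "real^'n^'n"
  assumes "symmetric_matrix A1" and "symmetric_matrix A2"
    and "\<not> (\<exists>Q\<in>perm_matrices. A1 = Q ** A2 ** transpose Q)"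
  shows "\<exists>P. symmetric_matrix P \<and> Theta P A1 \<noteq> Theta P A2"
proof (rule ccontr)
  assume "\<not> (\<exists>P. symmetric_matrix P \<and> Theta P A1 \<noteq> Theta P A2)"
  then have "Theta A1 A1 = Theta A1 A2" and "Theta A2 A2 = Theta A2 A1"
    using assms(1,2) by auto
  then obtain p q where p: "p permutes (UNIV::'n set)"
    and close1: "norm (A1 - perm_matrix p ** A2 ** transpose (perm_matrix p))^2 \<le> A2 \<bullet> A2 - A1 \<bullet> A1"
    and close2: "norm (A2 - perm_matrix q ** A1 ** transpose (perm_matrix q))^2 \<le> A1 \<bullet> A1 - A2 \<bullet> A2"
    using Theta_eq_imp_close[OF assms(1)] Theta_eq_imp_close[OF assms(2)] by metis
  have "norm (A1 - perm_matrix p ** A2 ** transpose (perm_matrix p))^2 \<le> 0"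
    using close1 close2 zero_le_power2[of "norm (A2 - perm_matrix q ** A1 ** transpose (perm_matrix q))"]
    by linarith
  then have "A1 = perm_matrix p ** A2 ** transpose (perm_matrix p)" by simp
  with perm_matrix_in_perm_matrices[OF p] assms(3) show False by blast
qed

end
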